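(* Let $I\subset S=K[x_1,\dots,x_t]$ be an $\mathfrak m$-primary monomial ideal with $x_i^{a_i}\in\mathscr G(I)$, $a_i\in\mathbb Z_{>0}$, for $i=1,\dots,t$. Then $v(I)\le \sum_{i=1}^t a_i - t$.
   Context: $K$ is a field, $S$ is standard graded and $\mathfrak m=\langle x_1,\dots,x_t\rangle$. For a proper graded ideal $I$, the $v$-number is $v(I)=\min\{k\ge 0 : \exists f\in S_k,\ \mathcal P\in\operatorname{Ass}(S/I) \text{ with } (I:f)=\mathcal P\}$. $\mathscr G(I)$ is the minimal monomial generating set of the monomial ideal $I$. *)

theory Defs
  imports "HOL-Library.Poly_Mapping"
begin

text \<open>The polynomial ring S = K[x_v : v in 'v] (with 'v a finite type, t = CARD('v))
  is modelled as finitely supported maps from exponent vectors to coefficients: a monomial is an exponent vector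
  (finitely supported 'v to nat), a polynomial a coefficient function.\<close>

type_synonym ('v, 'k) mpoly = "('v \<Rightarrow>\<^sub>0 nat) \<Rightarrow>\<^sub>0 'k"

definition monom :: "('v \<Rightarrow>\<^sub>0 nat) \<Rightarrow> ('v, 'k::comm_ring_1) mpoly" where
  "monom m = Poly_Mapping.single m 1"

definition var :: "'v \<Rightarrow> ('v, 'k::comm_ring_1) mpoly" where
  "var i = monom (Poly_Mapping.single i 1)"

definition is_ideal :: "'a::comm_ring_1 set \<Rightarrow> bool" where
  "is_ideal I \<longleftrightarrow> 0 \<in> I \<and> (\<forall>f\<in>I. \<forall>g\<in>I. f + g \<in> I) \<and> (\<forall>f\<in>I. \<forall>h. h * f \<in> I)"

definition ideal_gen :: "'a::comm_ring_1 set \<Rightarrow> 'a set" where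
  "ideal_gen A = \<Inter>{I. is_ideal I \<and> A \<subseteq> I}"

definition prime_ideal :: "'a::comm_ring_1 set \<Rightarrow> bool" where
  "prime_ideal P \<longleftrightarrow> is_ideal P \<and> P \<noteq> UNIV \<and> (\<forall>a b. a * b \<in> P \<longrightarrow> a \<in> P \<or> b \<in> P)"

definition primary_ideal :: "'a::comm_ring_1 set \<Rightarrow> bool" where
  "primary_ideal Q \<longleftrightarrow> is_ideal Q \<and> Q \<noteq> UNIV \<and>
     (\<forall>a b. a * b \<in> Q \<longrightarrow> a \<in> Q \<or> (\<exists>n. b ^ n \<in> Q))"

definition radical :: "'a::comm_ring_1 set \<Rightarrow> 'a set" where
  "radical I = {f. \<exists>n. f ^ n \<in> I}"

definition colon :: "'a::comm_ring_1 set \<Rightarrow> 'a \<Rightarrow> 'a set" where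
  "colon I f = {g. g * f \<in> I}"

definition Ass :: "'a::comm_ring_1 set \<Rightarrow> 'a set set" where
  "Ass I = {P. prime_ideal P \<and> (\<exists>f. colon I f = P)}"

definition max_ideal :: "('v, 'k::comm_ring_1) mpoly set" where
  "max_ideal = ideal_gen (range var)"

definition m_primary :: "('v, 'k::comm_ring_1) mpoly set \<Rightarrow> bool" where
  "m_primary I \<longleftrightarrow> primary_ideal I \<and> radical I = max_ideal"

definition mdeg :: "('v::finite \<Rightarrow>\<^sub>0 nat) \<Rightarrow> nat" where
  "mdeg m = (\<Sum>i\<in>UNIV. Poly_Mapping.lookup m i)"

text \<open>S_k: homogeneous polynomials of degree k (including 0).\<close>
definition homogeneous :: "nat \<Rightarrow> ('v::finite, 'k::comm_ring_1) mpoly \<Rightarrow> bool" where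
  "homogeneous k f \<longleftrightarrow> (\<forall>m\<in>Poly_Mapping.keys f. mdeg m = k)"

definition monomial_ideal :: "('v, 'k::comm_ring_1) mpoly set \<Rightarrow> bool" where
  "monomial_ideal I \<longleftrightarrow> is_ideal I \<and> I = ideal_gen {monom m | m. monom m \<in> I}"

definition mon_dvd :: "('v \<Rightarrow>\<^sub>0 nat) \<Rightarrow> ('v \<Rightarrow>\<^sub>0 nat) \<Rightarrow> bool" where
  "mon_dvd m n \<longleftrightarrow> (\<forall>i. Poly_Mapping.lookup m i \<le> Poly_Mapping.lookup n i)"

definition min_gens :: "('v, 'k::comm_ring_1) mpoly set \<Rightarrow> ('v, 'k) mpoly set" where
  "min_gens I = {monom m | m. monom m \<in> I \<and>
      (\<forall>m'. mon_dvd m' m \<and> m' \<noteq> m \<longrightarrow> monom m' \<notin> I)}"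

definition v_number :: "('v::finite, 'k::comm_ring_1) mpoly set \<Rightarrow> nat" where
  "v_number I = (LEAST k. \<exists>f P. homogeneous k f \<and> P \<in> Ass I \<and> colon I f = P)"

end

theory Submission
  imports Defs
begin

text \<open>Among the monomials outside I choose one, x^m, of largest degree; it exists because
  x_i^(a_i) \<in> I bounds every exponent of such a monomial by a_i - 1, and 1 \<notin> I.
  By maximality x_i x^m \<in> I for all i, so (I : x^m) contains every polynomial without constant
  term; conversely a g with nonzero constant term c would give c x^m \<in> I.
  Hence (I : x^m) is the prime ideal of polynomials without constant term, and
  v(I) \<le> deg x^m \<le> \<Sum>(a_i - 1). Only properness of I and x_i^(a_i) \<in> I are needed.\<close>

lemma is_ideal_sum:
  assumes "is_ideal I" "finite A" "\<And>x. x \<in> A \<Longrightarrow> h x \<in> I"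
  shows "sum h A \<in> I"
  using assms(2,3) by (induction A rule: finite_induct) (use assms(1) in \<open>auto simp: is_ideal_def\<close>)

lemma is_ideal_diff:
  assumes "is_ideal I" "x \<in> I" "y \<in> I"
  shows "x - y \<in> I"
proof -
  have "x + (-1) * y \<in> I" using assms unfolding is_ideal_def by blast
  then show ?thesis by simp
qed

lemma one_notin_proper_ideal:
  assumes "is_ideal I" "I \<noteq> UNIV"
  shows "1 \<notin> I"
  using assms by (metis UNIV_eq_I is_ideal_def mult_1_right)

lemma min_gens_subset: "min_gens I \<subseteq> I"
  unfolding min_gens_def by blast

lemma monom_add: "(monom (m + n) :: ('v, 'k::comm_ring_1) mpoly) = monom m * monom n"
  unfolding monom_def by (simp add: mult_single)

lemma var_pow: "(var i :: ('v, 'k::comm_ring_1) mpoly) ^ n = monom (Poly_Mapping.single i n)"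
  by (induction n) (simp_all add: var_def monom_def mult_single single_add[symmetric] add.commute)

lemma var_mult_monom:
  "(var i :: ('v, 'k::comm_ring_1) mpoly) * monom m = monom (m + Poly_Mapping.single i 1)"
  unfolding var_def by (simp add: monom_add add.commute)

lemma mdeg_add_single: "mdeg (m + Poly_Mapping.single i k :: 'v::finite \<Rightarrow>\<^sub>0 nat) = mdeg m + k"
  unfolding mdeg_def by (simp add: lookup_add sum.distrib lookup_single when_def)

lemma diff_single_add_single:
  assumes "k \<le> Poly_Mapping.lookup n i"
  shows "(n - Poly_Mapping.single i k) + Poly_Mapping.single i k = (n :: 'v \<Rightarrow>\<^sub>0 nat)"
  by (rule poly_mapping_eqI) (use assms in \<open>auto simp: lookup_add lookup_minus lookup_single when_def\<close>)

lemma poly_mapping_sum_singles: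
  "g = (\<Sum>m\<in>Poly_Mapping.keys g. Poly_Mapping.single m (Poly_Mapping.lookup g m))"
  by (rule poly_mapping_eqI) (simp add: lookup_sum lookup_single when_def in_keys_iff)

lemma add_eq_0_iff_poly_mapping: "(l + q :: 'v \<Rightarrow>\<^sub>0 nat) = 0 \<longleftrightarrow> l = 0 \<and> q = 0"
  by (metis add_is_0 lookup_add lookup_zero poly_mapping_eqI)

lemma lookup_mult_0:
  "Poly_Mapping.lookup (x * y :: ('v, 'k::comm_ring_1) mpoly) 0
     = Poly_Mapping.lookup x 0 * Poly_Mapping.lookup y 0"
proof -
  have "(\<Sum>q. Poly_Mapping.lookup y q when 0 = l + q) = (Poly_Mapping.lookup y 0 when l = 0)" for l
    by (simp add: add_eq_0_iff_poly_mapping eq_commute[of 0] conj_commute when_def)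
  then show ?thesis by (simp add: lookup_mult mult_when)
qed

definition no_constant_term :: "('v, 'k::comm_ring_1) mpoly set" where
  "no_constant_term = {g. Poly_Mapping.lookup g 0 = 0}"

lemma prime_ideal_no_constant_term: "prime_ideal (no_constant_term :: ('v, 'k::idom) mpoly set)"
proof -
  have "(1 :: ('v, 'k) mpoly) \<notin> no_constant_term"
    by (simp add: no_constant_term_def lookup_one)
  then have "no_constant_term \<noteq> (UNIV :: ('v, 'k) mpoly set)" by blast
  then show ?thesis
    unfolding prime_ideal_def is_ideal_def
    by (auto simp: no_constant_term_def lookup_mult_0 lookup_add)
qed

lemma mult_in_ideal_if_no_constant_term:
  fixes f g :: "('v, 'k::comm_ring_1) mpoly"
  assumes "is_ideal I" "\<And>i. var i * f \<in> I" "g \<in> no_constant_term"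
  shows "g * f \<in> I"
proof -
  have "Poly_Mapping.single n c * f \<in> I" if "n \<in> Poly_Mapping.keys g" for n c
  proof -
    have "n \<noteq> 0" using that assms(3) by (auto simp: no_constant_term_def in_keys_iff)
    then obtain i where "Poly_Mapping.lookup n i \<noteq> 0"
      by (metis lookup_zero poly_mapping_eqI)
    then have "(n - Poly_Mapping.single i 1) + Poly_Mapping.single i 1 = n"
      by (intro diff_single_add_single) simp
    then have "Poly_Mapping.single n c * f
        = Poly_Mapping.single (n - Poly_Mapping.single i 1) c * (var i * f)"
      by (simp add: var_def monom_def mult_single mult.assoc[symmetric])
    then show ?thesis using assms(1,2) by (simp add: is_ideal_def)
  qed
  then have "(\<Sum>n\<in>Poly_Mapping.keys g. Poly_Mapping.single n (Poly_Mapping.lookup g n) * f) \<in> I"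
    by (intro is_ideal_sum[OF assms(1)]) simp_all
  then show ?thesis
    by (subst poly_mapping_sum_singles) (simp add: sum_distrib_right)
qed

lemma colon_eq_no_constant_term:
  fixes f :: "('v, 'k::field) mpoly"
  assumes I: "is_ideal I" and "f \<notin> I" and var_mult: "\<And>i. var i * f \<in> I"
  shows "colon I f = no_constant_term"
proof
  show "no_constant_term \<subseteq> colon I f"
    using mult_in_ideal_if_no_constant_term[OF I var_mult] by (auto simp: colon_def)
next
  show "colon I f \<subseteq> no_constant_term"
  proof (rule subsetI, rule ccontr)
    fix g assume "g \<in> colon I f" and "g \<notin> no_constant_term"
    define c where "c = Poly_Mapping.lookup g 0"
    have "c \<noteq> 0" using \<open>g \<notin> no_constant_term\<close> by (simp add: no_constant_term_def c_def)
    have "g - Poly_Mapping.single 0 c \<in> no_constant_term"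
      by (simp add: no_constant_term_def c_def lookup_minus)
    then have "(g - Poly_Mapping.single 0 c) * f \<in> I"
      by (rule mult_in_ideal_if_no_constant_term[OF I var_mult])
    with \<open>g \<in> colon I f\<close> have "g * f - (g - Poly_Mapping.single 0 c) * f \<in> I"
      by (simp add: colon_def is_ideal_diff[OF I])
    then have "Poly_Mapping.single 0 c * f \<in> I" by (simp add: algebra_simps)
    then have "Poly_Mapping.single 0 (inverse c) * (Poly_Mapping.single 0 c * f) \<in> I"
      using I unfolding is_ideal_def by blast
    moreover have "Poly_Mapping.single 0 (inverse c) * (Poly_Mapping.single 0 c * f) = f"
      using \<open>c \<noteq> 0\<close> by (simp add: mult.assoc[symmetric] mult_single)
    ultimately have "f \<in> I" by simp
    with \<open>f \<notin> I\<close> show False ..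
  qed
qed

lemma v_number_le:
  assumes "homogeneous k f" "prime_ideal (colon I f)"
  shows "v_number I \<le> k"
  unfolding v_number_def by (rule Least_le) (use assms in \<open>auto simp: Ass_def\<close>)

lemma exponent_lt_if_monom_notin:
  assumes "is_ideal I" "(var i :: ('v, 'k::comm_ring_1) mpoly) ^ a \<in> I" "monom m \<notin> I"
  shows "Poly_Mapping.lookup m i < a"
proof (rule ccontr)
  assume "\<not> ?thesis"
  then have "monom m = monom (m - Poly_Mapping.single i a) * (var i ^ a :: ('v, 'k) mpoly)"
    by (simp add: var_pow monom_add[symmetric] diff_single_add_single)
  with assms show False by (simp add: is_ideal_def)
qed

lemma ex_maximal_monom_notin:
  fixes I :: "('v::finite, 'k::comm_ring_1) mpoly set"
  assumes I: "is_ideal I" "1 \<notin> I" and pow: "\<And>i. var i ^ a i \<in> I"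
  shows "\<exists>m. monom m \<notin> I \<and> (\<forall>i. var i * monom m \<in> I) \<and> mdeg m \<le> (\<Sum>i\<in>UNIV. a i - 1)"
proof -
  have deg_bound: "mdeg m \<le> (\<Sum>i\<in>UNIV. a i - 1)" if "monom m \<notin> I" for m
  proof -
    have "Poly_Mapping.lookup m i \<le> a i - 1" for i
      using exponent_lt_if_monom_notin[OF I(1) pow that, of i] by linarith
    then show ?thesis unfolding mdeg_def by (intro sum_mono)
  qed
  have "monom 0 \<notin> I" using I(2) by (simp add: monom_def)
  then obtain m where m: "monom m \<notin> I" and greatest: "\<And>n. monom n \<notin> I \<Longrightarrow> mdeg n \<le> mdeg m"
    using ex_has_greatest_nat[of "\<lambda>m. monom m \<notin> I" 0 mdeg "Suc (\<Sum>i\<in>UNIV. a i - 1)"] deg_bound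
    by (metis le_imp_less_Suc)
  have "var i * monom m \<in> I" for i
    using greatest[of "m + Poly_Mapping.single i 1"] by (force simp: var_mult_monom mdeg_add_single)
  with m deg_bound show ?thesis by blast
qed

theorem proposition4p3:
  fixes I :: "('v::finite, 'k::field) mpoly set"
    and a :: "'v \<Rightarrow> nat"
  assumes "monomial_ideal I"
    and "m_primary I"
    and "\<And>i. a i > 0"
    and "\<And>i. (var i) ^ (a i) \<in> min_gens I"
  shows "v_number I \<le> (\<Sum>i\<in>UNIV. a i) - card (UNIV :: 'v set)"
proof -
  have I: "is_ideal I" "1 \<notin> I"
    using assms(2) one_notin_proper_ideal by (auto simp: m_primary_def primary_ideal_def)
  obtain m where m: "monom m \<notin> I" "\<And>i. var i * monom m \<in> I"
      and deg: "mdeg m \<le> (\<Sum>i\<in>UNIV. a i - 1)"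
    using ex_maximal_monom_notin[OF I] assms(4) min_gens_subset by blast
  have "colon I (monom m) = no_constant_term"
    using colon_eq_no_constant_term[OF I(1) m] .
  then have "v_number I \<le> mdeg m"
    using prime_ideal_no_constant_term
    by (intro v_number_le[of "mdeg m" "monom m"]) (simp_all add: homogeneous_def monom_def)
  also note deg
  also have "(\<Sum>i\<in>UNIV. a i - 1) = (\<Sum>i\<in>UNIV. a i) - card (UNIV :: 'v set)"
    using assms(3) by (simp add: sum_subtractf_nat Suc_le_eq)
  finally show ?thesis .
qed

end
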